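(* Let $\mathcal{I}$ be an inclusion-wise minimal unsatisfiable instance of $\mathrm{CSP}(\mathcal{A})$, i.e., $\mathcal{I}$ is unsatisfiable but removing any single constraint yields a satisfiable instance. Then the primal graph of $\mathcal{I}$ is a cycle.
   Context: Allen's interval algebra has domain $\mathbb{I}=\{[a,b] : a,b\in\mathbb{Q},\ a<b\}$; for $I=[a,b]$ write $I^-=a$, $I^+=b$. Basic relations: $x\,\mathsf{p}\,y$ iff $x^+<y^-$; $x\,\mathsf{m}\,y$ iff $x^+=y^-$; $x\,\mathsf{o}\,y$ iff $x^-<y^-<x^+<y^+$; $x\,\mathsf{d}\,y$ iff $y^-<x^-$ and $x^+<y^+$; $x\,\mathsf{s}\,y$ iff $x^-=y^-$ and $x^+<y^+$; $x\,\mathsf{f}\,y$ iff $x^+=y^+$ and $y^-<x^-$; $x\equiv y$ iff $x=y$; inverses $\mathsf{ri}$ with $x\,\mathsf{ri}\,y$ iff $y\,\mathsf{r}\,x$; $\mathcal{A}$ is the set of these 13 relations. An instance of $\mathrm{CSP}(\mathcal{A})$ consists of variables and binary constraints $x\,R\,y$ with $R\in\mathcal{A}$; it is satisfiable if an assignment of intervals satisfies all constraints. The primal graph of an instance is the undirected multigraph whose vertices are the variables and which has one edge $\{x,y\}$ for each constraint $x\,R\,y$; loops and parallel edges are allowed, and a single loop or a pair of parallel edges counts as a cycle. *)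

theory Defs
  imports Complex_Main "HOL-Library.Multiset"
begin

type_synonym interval = "rat \<times> rat"

definition is_interval :: "interval \<Rightarrow> bool" where
  "is_interval I \<longleftrightarrow> fst I < snd I"

text \<open>The 13 basic relations of Allen's interval algebra.\<close>
datatype allen = Ap | Am | Ao | Ad | As | Af | Aeq | Api | Ami | Aoi | Adi | Asi | Afi

fun allen_rel :: "allen \<Rightarrow> interval \<Rightarrow> interval \<Rightarrow> bool" where
  "allen_rel Ap x y \<longleftrightarrow> snd x < fst y"
| "allen_rel Am x y \<longleftrightarrow> snd x = fst y"
| "allen_rel Ao x y \<longleftrightarrow> fst x < fst y \<and> fst y < snd x \<and> snd x < snd y"
| "allen_rel Ad x y \<longleftrightarrow> fst y < fst x \<and> snd x < snd y"
| "allen_rel As x y \<longleftrightarrow> fst x = fst y \<and> snd x < snd y"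
| "allen_rel Af x y \<longleftrightarrow> snd x = snd y \<and> fst y < fst x"
| "allen_rel Aeq x y \<longleftrightarrow> x = y"
| "allen_rel Api x y \<longleftrightarrow> snd y < fst x"
| "allen_rel Ami x y \<longleftrightarrow> snd y = fst x"
| "allen_rel Aoi x y \<longleftrightarrow> fst y < fst x \<and> fst x < snd y \<and> snd y < snd x"
| "allen_rel Adi x y \<longleftrightarrow> fst x < fst y \<and> snd y < snd x"
| "allen_rel Asi x y \<longleftrightarrow> fst y = fst x \<and> snd y < snd x"
| "allen_rel Afi x y \<longleftrightarrow> snd y = snd x \<and> fst x < fst y"

text \<open>An instance of CSP(A): a finite list of constraints (x, R, y), meaning x R y.
  Repetitions are allowed (the primal graph is a multigraph).\<close>
type_synonym 'v csp_instance = "('v \<times> allen \<times> 'v) list"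

definition satisfiable :: "'v csp_instance \<Rightarrow> bool" where
  "satisfiable C \<longleftrightarrow> (\<exists>\<sigma> :: 'v \<Rightarrow> interval. (\<forall>v. is_interval (\<sigma> v)) \<and>
      (\<forall>(x, R, y) \<in> set C. allen_rel R (\<sigma> x) (\<sigma> y)))"

definition remove_constraint :: "'v csp_instance \<Rightarrow> nat \<Rightarrow> 'v csp_instance" where
  "remove_constraint C i = take i C @ drop (Suc i) C"

definition minimal_unsat :: "'v csp_instance \<Rightarrow> bool" where
  "minimal_unsat C \<longleftrightarrow> \<not> satisfiable C \<and> (\<forall>i < length C. satisfiable (remove_constraint C i))"

text \<open>Primal graph: vertices are the variables of the instance, one (unordered) edge
  per constraint; an unordered edge {x,y} is represented as a set (a loop gives {x}).\<close>
definition vars :: "'v csp_instance \<Rightarrow> 'v set" where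
  "vars C = (\<Union>(x, R, y) \<in> set C. {x, y})"

definition primal_edges :: "'v csp_instance \<Rightarrow> 'v set multiset" where
  "primal_edges C = mset (map (\<lambda>(x, R, y). {x, y}) C)"

text \<open>A multigraph (V, E) is a cycle iff there are k \<ge> 1 distinct vertices v_0..v_{k-1}
  forming V such that the edge multiset is exactly {v_i, v_{(i+1) mod k}}, i < k.
  k = 1 is a single loop, k = 2 a pair of parallel edges, k \<ge> 3 a simple cycle.\<close>
definition is_cycle :: "'v set \<Rightarrow> 'v set multiset \<Rightarrow> bool" where
  "is_cycle V E \<longleftrightarrow> (\<exists>vs. vs \<noteq> [] \<and> distinct vs \<and> set vs = V \<and>
      E = mset (map (\<lambda>i. {vs ! i, vs ! ((i + 1) mod length vs)}) [0..<length vs]))"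

end

theory Submission
  imports Defs
begin

(* Encoding an interval by its start point (v, False) and end point (v, True) turns every Allen
   constraint into strict and non-strict inequalities between points, i.e. into edges of a point
   graph. An instance is satisfiable iff this graph has no closed walk through a strict edge;
   if there is none, numbering each point by how many points lie strictly below it solves it.
   In an inclusion-minimal unsatisfiable instance without loops take a shortest such walk. It
   visits no point twice, and it cannot leave the start point of a variable along a constraint
   edge while also visiting the end point of that variable: the edge from start to end point
   would close a shorter strict walk. Hence the variables at which the walk follows constraint
   edges are pairwise distinct and, in order, form a cycle of the primal graph, and by minimality
   its constraints are all constraints of the instance, each occurring once. A loop x R x is
   unsatisfiable on its own unless R is equality, in which case it is redundant. *)

section \<open>Point graph of a constraint set\<close>

type_synonym 'v point = "'v \<times> bool"

datatype 'v edge =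
  Edge (src: "'v point") (dst: "'v point") (strict: bool) (label: "('v \<times> allen \<times> 'v) option")

fun endpoint_constraints :: "allen \<Rightarrow> 'v \<Rightarrow> 'v \<Rightarrow> ('v point \<times> 'v point \<times> bool) list" where
  "endpoint_constraints Ap x y = [((x,True),(y,False),True)]"
| "endpoint_constraints Am x y = [((x,True),(y,False),False), ((y,False),(x,True),False)]"
| "endpoint_constraints Ao x y =
     [((x,False),(y,False),True), ((y,False),(x,True),True), ((x,True),(y,True),True)]"
| "endpoint_constraints Ad x y = [((y,False),(x,False),True), ((x,True),(y,True),True)]"
| "endpoint_constraints As x y =
     [((x,False),(y,False),False), ((y,False),(x,False),False), ((x,True),(y,True),True)]"
| "endpoint_constraints Af x y =
     [((x,True),(y,True),False), ((y,True),(x,True),False), ((y,False),(x,False),True)]"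
| "endpoint_constraints Aeq x y = [((x,False),(y,False),False), ((y,False),(x,False),False),
     ((x,True),(y,True),False), ((y,True),(x,True),False)]"
| "endpoint_constraints Api x y = [((y,True),(x,False),True)]"
| "endpoint_constraints Ami x y = [((y,True),(x,False),False), ((x,False),(y,True),False)]"
| "endpoint_constraints Aoi x y =
     [((y,False),(x,False),True), ((x,False),(y,True),True), ((y,True),(x,True),True)]"
| "endpoint_constraints Adi x y = [((x,False),(y,False),True), ((y,True),(x,True),True)]"
| "endpoint_constraints Asi x y =
     [((y,False),(x,False),False), ((x,False),(y,False),False), ((y,True),(x,True),True)]"
| "endpoint_constraints Afi x y =
     [((y,True),(x,True),False), ((x,True),(y,True),False), ((x,False),(y,False),True)]"

lemma allen_rel_iff_endpoint_constraints:
  fixes f :: "'v point \<Rightarrow> rat"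
  shows "allen_rel R (f (x,False), f (x,True)) (f (y,False), f (y,True)) \<longleftrightarrow>
    (\<forall>(p,q,s) \<in> set (endpoint_constraints R x y). if s then f p < f q else f p \<le> f q)"
  by (cases R) auto

definition scope :: "'v \<times> allen \<times> 'v \<Rightarrow> 'v set" where
  "scope = (\<lambda>(x, R, y). {x, y})"

lemma scope_simp [simp]: "scope (x, R, y) = {x, y}"
  by (simp add: scope_def)

lemma finite_scope [simp]: "finite (scope c)"
  by (cases c) simp

lemma scope_endpoint_constraints:
  "(p, q, s) \<in> set (endpoint_constraints R x y) \<Longrightarrow> {fst p, fst q} = scope (x, R, y)"
  by (cases R) auto

definition interval_edge :: "'v \<Rightarrow> 'v edge" where
  "interval_edge v = Edge (v, False) (v, True) True None"

definition point_edges :: "('v \<times> allen \<times> 'v) set \<Rightarrow> 'v edge set" where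
  "point_edges D = range interval_edge \<union>
     {Edge p q s (Some (x, R, y)) | p q s x R y.
        (x, R, y) \<in> D \<and> (p, q, s) \<in> set (endpoint_constraints R x y)}"

lemma interval_edge_in_point_edges [simp]: "interval_edge v \<in> point_edges D"
  by (simp add: point_edges_def)

lemma point_edgesE:
  assumes "e \<in> point_edges D"
  obtains (interval) v where "e = interval_edge v"
  | (constraint) p q s x R y where "e = Edge p q s (Some (x, R, y))" "(x, R, y) \<in> D"
      "(p, q, s) \<in> set (endpoint_constraints R x y)"
  using assms unfolding point_edges_def by blast

lemma constraint_edge_in_point_edges:
  assumes "e \<in> point_edges D" "label e = Some c"
  shows "c \<in> D" "{fst (src e), fst (dst e)} = scope c"
proof -
  obtain p q s x R y where e: "e = Edge p q s (Some (x, R, y))" and "(x, R, y) \<in> D"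
    and pqs: "(p, q, s) \<in> set (endpoint_constraints R x y)"
    using assms by (cases rule: point_edgesE) (auto simp: interval_edge_def)
  moreover have "c = (x, R, y)"
    using assms(2) e by simp
  ultimately show "c \<in> D" "{fst (src e), fst (dst e)} = scope c"
    using scope_endpoint_constraints[OF pqs] e by simp_all
qed

lemma point_edges_relabel:
  assumes "e \<in> point_edges D" "\<And>c. label e = Some c \<Longrightarrow> c \<in> D'"
  shows "e \<in> point_edges D'"
  using assms by (cases rule: point_edgesE) (auto simp: point_edges_def)

fun walk :: "'v edge list \<Rightarrow> 'v point \<Rightarrow> 'v point \<Rightarrow> bool" where
  "walk [] a b \<longleftrightarrow> a = b"
| "walk (e # es) a b \<longleftrightarrow> src e = a \<and> walk es (dst e) b"

lemma walk_snoc [simp]: "walk (es @ [e]) a b \<longleftrightarrow> walk es a (src e) \<and> dst e = b"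
  by (induction es arbitrary: a) auto

lemma walk_append: "walk (xs @ ys) a b \<longleftrightarrow> (\<exists>m. walk xs a m \<and> walk ys m b)"
  by (induction xs arbitrary: a) auto

section \<open>Consistency and strict cycles\<close>

definition strict_cycle :: "('v \<times> allen \<times> 'v) set \<Rightarrow> 'v edge list \<Rightarrow> 'v point \<Rightarrow> bool" where
  "strict_cycle D es p \<longleftrightarrow> walk es p p \<and> set es \<subseteq> point_edges D \<and> (\<exists>e \<in> set es. strict e)"

definition consistent :: "('v \<times> allen \<times> 'v) set \<Rightarrow> bool" where
  "consistent D \<longleftrightarrow> (\<exists>\<sigma> :: 'v \<Rightarrow> interval. (\<forall>v. is_interval (\<sigma> v)) \<and>
      (\<forall>(x, R, y) \<in> D. allen_rel R (\<sigma> x) (\<sigma> y)))"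

lemma satisfiable_iff_consistent: "satisfiable C \<longleftrightarrow> consistent (set C)"
  by (simp add: satisfiable_def consistent_def)

lemma consistent_subset: "consistent D \<Longrightarrow> D' \<subseteq> D \<Longrightarrow> consistent D'"
  unfolding consistent_def by blast

definition satisfies_edge :: "('v point \<Rightarrow> 'a :: order) \<Rightarrow> 'v edge \<Rightarrow> bool" where
  "satisfies_edge f e \<longleftrightarrow> (if strict e then f (src e) < f (dst e) else f (src e) \<le> f (dst e))"

lemma walk_satisfies_edges:
  assumes "walk es a b" "\<forall>e \<in> set es. satisfies_edge f e"
  shows "f a \<le> f b \<and> ((\<exists>e \<in> set es. strict e) \<longrightarrow> f a < f b)"
  using assms
proof (induction es arbitrary: a)
  case (Cons e es)
  then have "f (dst e) \<le> f b" "(\<exists>e \<in> set es. strict e) \<longrightarrow> f (dst e) < f b"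
    "src e = a" "satisfies_edge f e"
    by auto
  then show ?case
    unfolding satisfies_edge_def by (auto split: if_splits intro: order.strict_trans1 order.strict_trans2)
qed simp

lemma consistent_satisfies_edges:
  assumes "consistent D"
  obtains f :: "'v point \<Rightarrow> rat" where "\<And>e. e \<in> point_edges D \<Longrightarrow> satisfies_edge f e"
proof -
  obtain \<sigma> :: "'v \<Rightarrow> interval" where proper: "\<And>v. is_interval (\<sigma> v)"
    and sat: "\<And>x R y. (x, R, y) \<in> D \<Longrightarrow> allen_rel R (\<sigma> x) (\<sigma> y)"
    using assms unfolding consistent_def by fast
  define f where "f p = (if snd p then snd (\<sigma> (fst p)) else fst (\<sigma> (fst p)))" for p
  have \<sigma>_eq: "\<sigma> x = (f (x, False), f (x, True))" for x
    by (simp add: f_def)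
  show thesis
  proof (rule that)
    fix e assume "e \<in> point_edges D"
    then show "satisfies_edge f e"
    proof (cases rule: point_edgesE)
      case (interval v)
      then show ?thesis
        using proper[of v] by (simp add: satisfies_edge_def interval_edge_def f_def is_interval_def)
    next
      case (constraint p q s x R y)
      then have "if s then f p < f q else f p \<le> f q"
        using sat[of x R y] allen_rel_iff_endpoint_constraints[of R f x y] by (auto simp: \<sigma>_eq)
      then show ?thesis
        using constraint(1) by (simp add: satisfies_edge_def)
    qed
  qed
qed

lemma strict_cycle_imp_inconsistent:
  fixes D :: "('v \<times> allen \<times> 'v) set"
  assumes "strict_cycle D es p"
  shows "\<not> consistent D"
proof
  assume "consistent D"
  then obtain f :: "'v point \<Rightarrow> rat" where "\<And>e. e \<in> point_edges D \<Longrightarrow> satisfies_edge f e"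
    by (rule consistent_satisfies_edges) blast
  then have "f p < f p"
    using assms walk_satisfies_edges[of es p p f] unfolding strict_cycle_def by blast
  then show False
    by simp
qed

lemma potential_if_no_strict_cycle:
  assumes "finite P" and acyclic: "\<And>es p. \<not> strict_cycle D es p"
  obtains h :: "'v point \<Rightarrow> nat"
  where "\<And>e. e \<in> point_edges D \<Longrightarrow> h (src e) \<le> h (dst e)"
    and "\<And>e. e \<in> point_edges D \<Longrightarrow> strict e \<Longrightarrow> src e \<in> P \<Longrightarrow> h (src e) < h (dst e)"
proof
  define reach where
    "reach r q \<longleftrightarrow> (\<exists>es. walk es r q \<and> set es \<subseteq> point_edges D \<and> (\<exists>e \<in> set es. strict e))"
    for r q
  define h where "h q = card {r \<in> P. reach r q}" for q
  have extend: "reach r (dst e)" if "e \<in> point_edges D" "reach r (src e)" for r e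
  proof -
    obtain es where "walk es r (src e)" "set es \<subseteq> point_edges D" "\<exists>e \<in> set es. strict e"
      using \<open>reach r (src e)\<close> unfolding reach_def by blast
    then show ?thesis
      unfolding reach_def using \<open>e \<in> point_edges D\<close>
      by (intro exI[of _ "es @ [e]"]) auto
  qed
  fix e assume e: "e \<in> point_edges D"
  show "h (src e) \<le> h (dst e)"
    unfolding h_def by (rule card_mono) (use \<open>finite P\<close> extend[OF e] in auto)
  assume "strict e" "src e \<in> P"
  have "reach (src e) (dst e)"
    unfolding reach_def using e \<open>strict e\<close> by (intro exI[of _ "[e]"]) auto
  moreover have "\<not> reach (src e) (src e)"
    using acyclic unfolding reach_def strict_cycle_def by blast
  ultimately have "{r \<in> P. reach r (src e)} \<subset> {r \<in> P. reach r (dst e)}"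
    using extend[OF e] \<open>src e \<in> P\<close> by blast
  then show "h (src e) < h (dst e)"
    unfolding h_def by (rule psubset_card_mono[rotated]) (use \<open>finite P\<close> in simp)
qed

lemma consistent_if_no_strict_cycle:
  fixes D :: "('v \<times> allen \<times> 'v) set"
  assumes "finite D" and acyclic: "\<And>es p. \<not> strict_cycle D es p"
  shows "consistent D"
proof -
  define V where "V = \<Union> (scope ` D)"
  have "finite (V \<times> (UNIV :: bool set))"
    unfolding V_def using \<open>finite D\<close> by simp
  then obtain h :: "'v point \<Rightarrow> nat"
    where mono: "\<And>e. e \<in> point_edges D \<Longrightarrow> h (src e) \<le> h (dst e)"
      and strict_mono: "\<And>e. e \<in> point_edges D \<Longrightarrow> strict e \<Longrightarrow> src e \<in> V \<times> UNIV \<Longrightarrow>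
        h (src e) < h (dst e)"
    using potential_if_no_strict_cycle acyclic by blast
  define f where "f p = (of_nat (h p) :: rat)" for p
  define \<sigma> where "\<sigma> v = (if v \<in> V then (f (v, False), f (v, True)) else (0, 1))" for v
  have "is_interval (\<sigma> v)" for v
    using strict_mono[OF interval_edge_in_point_edges, of v]
    by (simp add: \<sigma>_def f_def is_interval_def interval_edge_def)
  moreover have "allen_rel R (\<sigma> x) (\<sigma> y)" if c: "(x, R, y) \<in> D" for x R y
  proof -
    have xy: "x \<in> V" "y \<in> V"
      using c unfolding V_def by force+
    have "if s then f p < f q else f p \<le> f q"
      if pqs: "(p, q, s) \<in> set (endpoint_constraints R x y)" for p q s
    proof -
      have "Edge p q s (Some (x, R, y)) \<in> point_edges D"
        using c pqs unfolding point_edges_def by blast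
      moreover have "p \<in> V \<times> UNIV"
        using scope_endpoint_constraints[OF pqs] xy by (cases p) auto
      ultimately show ?thesis
        using mono strict_mono by (fastforce simp: f_def)
    qed
    then show ?thesis
      using xy allen_rel_iff_endpoint_constraints[of R f x y] by (auto simp: \<sigma>_def)
  qed
  ultimately show ?thesis
    unfolding consistent_def by blast
qed

section \<open>Shortest strict cycles\<close>

lemma walk_nth: "walk es a b \<Longrightarrow> Suc j < length es \<Longrightarrow> dst (es ! j) = src (es ! Suc j)"
  by (induction es arbitrary: a j) (auto simp: nth_Cons neq_Nil_conv split: nat.split)

lemma walk_take_drop:
  assumes "walk es a b" "m < length es"
  shows "walk (take m es) a (src (es ! m))" "walk (drop m es) (src (es ! m)) b"
proof -
  obtain c where c: "walk (take m es) a c" "walk (drop m es) c b"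
    using assms(1) walk_append[of "take m es" "drop m es"] by auto
  moreover have "drop m es = es ! m # drop (Suc m) es"
    using assms(2) by (simp add: Cons_nth_drop_Suc)
  ultimately have "c = src (es ! m)"
    by simp
  with c show "walk (take m es) a (src (es ! m))" "walk (drop m es) (src (es ! m)) b"
    by simp_all
qed

lemma strict_cycle_rotate:
  assumes "strict_cycle D es p" "i < length es"
  shows "strict_cycle D (rotate i es) (src (es ! i))"
proof -
  have "rotate i es = drop i es @ take i es"
    using assms(2) by (simp add: rotate_drop_take)
  moreover have "walk (drop i es @ take i es) (src (es ! i)) (src (es ! i))"
    using assms walk_take_drop[of es p p i] unfolding strict_cycle_def walk_append by blast
  ultimately have "walk (rotate i es) (src (es ! i)) (src (es ! i))"
    by simp
  then show ?thesis
    using assms(1) unfolding strict_cycle_def set_rotate by blast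
qed

lemma strict_cycle_append_interval_edge:
  assumes "walk es (v, True) (v, False)" "set es \<subseteq> point_edges D"
  shows "strict_cycle D (es @ [interval_edge v]) (v, True)"
  using assms interval_edge_in_point_edges[of v D] by (simp add: strict_cycle_def interval_edge_def)

definition cycle_edges :: "'a list \<Rightarrow> 'a set list" where
  "cycle_edges vs = map (\<lambda>i. {vs ! i, vs ! ((i + 1) mod length vs)}) [0..<length vs]"

lemma is_cycle_iff_cycle_edges:
  "is_cycle V E \<longleftrightarrow> (\<exists>vs. vs \<noteq> [] \<and> distinct vs \<and> set vs = V \<and> E = mset (cycle_edges vs))"
  by (simp add: is_cycle_def cycle_edges_def)

lemma Union_cycle_edges: "\<Union> (set (cycle_edges vs)) = set vs"
proof
  show "\<Union> (set (cycle_edges vs)) \<subseteq> set vs"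
  proof
    fix v assume "v \<in> \<Union> (set (cycle_edges vs))"
    then obtain i where "i < length vs" "v = vs ! i \<or> v = vs ! ((i + 1) mod length vs)"
      by (auto simp: cycle_edges_def)
    then show "v \<in> set vs"
      by (metis nth_mem mod_less_divisor gr_zeroI less_zeroE)
  qed
  show "set vs \<subseteq> \<Union> (set (cycle_edges vs))"
    by (force simp: cycle_edges_def in_set_conv_nth)
qed

lemma distinct_cycle_edges:
  assumes "distinct vs" "length vs \<noteq> 2"
  shows "distinct (cycle_edges vs)"
proof -
  let ?k = "length vs"
  have False if ij: "i < j" "j < ?k"
    and eq: "{vs ! i, vs ! ((i + 1) mod ?k)} = {vs ! j, vs ! ((j + 1) mod ?k)}" for i j
  proof -
    have "vs ! i \<noteq> vs ! j"
      using ij assms(1) by (simp add: nth_eq_iff_index_eq)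
    then have "vs ! i = vs ! ((j + 1) mod ?k)" "vs ! j = vs ! ((i + 1) mod ?k)"
      using eq by (auto simp: doubleton_eq_iff)
    moreover have "(j + 1) mod ?k < ?k" "(i + 1) mod ?k < ?k"
      using le_less_trans[OF le0 ij(2)] by simp_all
    ultimately have i: "i = (j + 1) mod ?k" and j: "j = (i + 1) mod ?k"
      using ij assms(1) by (simp_all add: nth_eq_iff_index_eq)
    have "j = i + 1"
      using j ij by simp
    with i have "i = (i + 2) mod ?k"
      by simp
    moreover have "i + 2 \<le> ?k"
      using \<open>j = i + 1\<close> ij by simp
    ultimately show False
      using assms(2) by (cases "i + 2 = ?k") auto
  qed
  then show ?thesis
    unfolding cycle_edges_def distinct_conv_nth by (auto simp: linorder_neq_iff)
qed

lemma unlabelled_point_edge: "e \<in> point_edges D \<Longrightarrow> label e = None \<Longrightarrow> e \<in> range interval_edge"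
  by (auto elim: point_edgesE)

lemma walk_interval_edges_not_closed:
  assumes "walk es a b" "set es \<subseteq> range interval_edge" "es \<noteq> []"
  shows "a \<noteq> b"
proof -
  obtain v es' where es: "es = interval_edge v # es'"
    using assms(2,3) by (cases es) auto
  show ?thesis
  proof (cases es')
    case Nil
    then show ?thesis
      using assms(1) es by (auto simp: interval_edge_def)
  next
    case (Cons e' es'')
    then show ?thesis
      using assms(1,2) es by (auto simp: interval_edge_def)
  qed
qed

fun var_walk :: "'v edge list \<Rightarrow> 'v \<Rightarrow> 'v \<Rightarrow> bool" where
  "var_walk [] u w \<longleftrightarrow> u = w"
| "var_walk (e # es) u w \<longleftrightarrow> fst (src e) = u \<and> var_walk es (fst (dst e)) w"

lemma var_walk_labelled_edges:
  "walk es a b \<Longrightarrow> set es \<subseteq> point_edges D \<Longrightarrow>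
    var_walk (filter (\<lambda>e. label e \<noteq> None) es) (fst a) (fst b)"
proof (induction es arbitrary: a)
  case (Cons e es)
  then have IH: "var_walk (filter (\<lambda>e. label e \<noteq> None) es) (fst (dst e)) (fst b)"
    by simp
  show ?case
  proof (cases "label e = None")
    case True
    then have "fst (src e) = fst (dst e)"
      using Cons.prems unlabelled_point_edge[of e D] by (auto simp: interval_edge_def)
    then show ?thesis
      using IH True Cons.prems(1) by simp
  next
    case False
    then show ?thesis
      using IH Cons.prems(1) by simp
  qed
qed simp

lemma var_walk_nth:
  "var_walk cs u w \<Longrightarrow> j < length cs \<Longrightarrow>
    fst (dst (cs ! j)) = (if Suc j < length cs then fst (src (cs ! Suc j)) else w)"
proof (induction cs arbitrary: u j)
  case (Cons c cs)
  then show ?case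
    by (cases j; cases cs) auto
qed simp

lemma var_walk_closed_nth:
  assumes "var_walk cs u u" "j < length cs"
  shows "fst (dst (cs ! j)) = fst (src (cs ! ((j + 1) mod length cs)))"
proof (cases "Suc j < length cs")
  case False
  then have "j + 1 = length cs"
    using assms(2) by simp
  then have "(j + 1) mod length cs = 0"
    by simp
  moreover have "fst (src (cs ! 0)) = u"
    using assms by (cases cs) auto
  ultimately show ?thesis
    using var_walk_nth[OF assms] False by simp
qed (use var_walk_nth[OF assms] in simp)

locale shortest_strict_cycle =
  fixes D :: "('v \<times> allen \<times> 'v) set" and es :: "'v edge list" and p :: "'v point"
  assumes strict_cycle: "strict_cycle D es p"
    and shortest: "\<And>es' q. strict_cycle D es' q \<Longrightarrow> length es \<le> length es'"
    and loop_free: "\<And>x R y. (x, R, y) \<in> D \<Longrightarrow> x \<noteq> y"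
begin

lemma no_early_return:
  assumes cycle: "strict_cycle D cs q" and "length cs = length es" "0 < m" "m < length cs"
  shows "src (cs ! m) \<noteq> q"
proof
  assume "src (cs ! m) = q"
  then have walks: "walk (take m cs) q q" "walk (drop m cs) q q"
    using cycle assms(4) walk_take_drop[of cs q q m] unfolding strict_cycle_def by auto
  have "set cs = set (take m cs) \<union> set (drop m cs)"
    by (metis append_take_drop_id set_append)
  then have "strict_cycle D (take m cs) q \<or> strict_cycle D (drop m cs) q"
    using cycle walks unfolding strict_cycle_def by blast
  then show False
  proof
    assume "strict_cycle D (take m cs) q"
    from shortest[OF this] show False
      using assms(2-4) by simp
  next
    assume "strict_cycle D (drop m cs) q"
    from shortest[OF this] show False
      using assms(2-4) by simp
  qed
qed

lemma distinct_sources: "distinct (map src es)"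
proof (rule ccontr)
  assume "\<not> distinct (map src es)"
  then obtain i j where ij: "i < j" "j < length es" "src (es ! i) = src (es ! j)"
    by (auto simp: distinct_conv_nth linorder_neq_iff)
  have "strict_cycle D (rotate i es) (src (es ! i))"
    using strict_cycle ij by (intro strict_cycle_rotate) auto
  then have "src (rotate i es ! (j - i)) \<noteq> src (es ! i)"
    by (rule no_early_return) (use ij in auto)
  moreover have "rotate i es ! (j - i) = es ! j"
    using ij by (simp add: nth_rotate)
  ultimately show False
    using ij by simp
qed

lemma labelled_edge_changes_var:
  assumes "e \<in> set es" "label e \<noteq> None"
  shows "fst (src e) \<noteq> fst (dst e)"
proof -
  obtain x R y where "label e = Some (x, R, y)"
    using assms(2) by auto
  moreover have "e \<in> point_edges D"
    using assms(1) strict_cycle by (auto simp: strict_cycle_def)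
  ultimately have "{fst (src e), fst (dst e)} = {x, y}" "x \<noteq> y"
    using constraint_edge_in_point_edges[of e D] loop_free by auto
  then show ?thesis
    by auto
qed

(* Otherwise rotate the cycle to start with c; the part from (v, True) back to (v, False), closed
   by the interval edge of v, is a shorter strict cycle, as c itself cannot end in (v, True). *)
lemma no_shortcut:
  assumes "c \<in> set es" "label c \<noteq> None" "src c = (v, False)"
  shows "(v, True) \<notin> src ` set es"
proof
  assume "(v, True) \<in> src ` set es"
  obtain i where i: "i < length es" "es ! i = c"
    using assms(1) by (auto simp: in_set_conv_nth)
  define cs where "cs = rotate i es"
  have "strict_cycle D cs (v, False)"
    unfolding cs_def using strict_cycle_rotate[OF strict_cycle i(1)] i(2) assms(3) by simp
  then have walk: "walk cs (v, False) (v, False)" and edges: "set cs \<subseteq> point_edges D"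
    by (simp_all add: strict_cycle_def)
  have len: "length cs = length es"
    by (simp add: cs_def)
  have "es \<noteq> []"
    using i(1) by auto
  then have cs0: "cs ! 0 = c"
    using i nth_rotate[of 0 es i] by (simp add: cs_def)
  obtain e where "e \<in> set cs" "src e = (v, True)"
    using \<open>(v, True) \<in> src ` set es\<close> by (auto simp: cs_def)
  then obtain m where m: "m < length cs" "src (cs ! m) = (v, True)"
    by (auto simp: in_set_conv_nth)
  have "m \<noteq> 0"
  proof
    assume "m = 0"
    then show False
      using m cs0 assms(3) by simp
  qed
  moreover have "m \<noteq> 1"
  proof
    assume "m = 1"
    then have "dst c = (v, True)"
      using walk_nth[OF walk, of 0] m cs0 by simp
    then show False
      using labelled_edge_changes_var assms by fastforce
  qed
  moreover have "length es \<le> length cs - m + 1"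
  proof -
    have "walk (drop m cs) (v, True) (v, False)"
      using walk_take_drop(2)[OF walk m(1)] m(2) by simp
    then have "strict_cycle D (drop m cs @ [interval_edge v]) (v, True)"
      using edges set_drop_subset[of m cs] by (intro strict_cycle_append_interval_edge) auto
    from shortest[OF this] show ?thesis
      by simp
  qed
  ultimately show False
    using m len by simp
qed

definition labelled_edges :: "'v edge list" where
  "labelled_edges = filter (\<lambda>e. label e \<noteq> None) es"

definition cycle_vars :: "'v list" where
  "cycle_vars = map (fst \<circ> src) labelled_edges"

definition cycle_constraints :: "('v \<times> allen \<times> 'v) list" where
  "cycle_constraints = map (the \<circ> label) labelled_edges"

lemma labelled_edges_nonempty: "labelled_edges \<noteq> []"
proof
  assume "labelled_edges = []"
  then have "set es \<subseteq> range interval_edge"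
    using strict_cycle unlabelled_point_edge
    by (fastforce simp: labelled_edges_def filter_empty_conv strict_cycle_def)
  moreover have "es \<noteq> []"
    using strict_cycle by (auto simp: strict_cycle_def)
  ultimately show False
    using walk_interval_edges_not_closed[of es p p] strict_cycle by (simp add: strict_cycle_def)
qed

lemma labelled_edge_point_edges:
  assumes "e \<in> set labelled_edges"
  shows "e \<in> set es" "e \<in> point_edges D" "label e \<noteq> None"
  using assms strict_cycle by (auto simp: labelled_edges_def strict_cycle_def)

lemma labelled_edge_source_determined:
  assumes "c \<in> set labelled_edges" "c' \<in> set labelled_edges" "fst (src c) = fst (src c')"
  shows "src c = src c'"
proof (rule ccontr)
  have no_both_ends: False
    if "c1 \<in> set labelled_edges" "c2 \<in> set labelled_edges"
      "src c1 = (w, False)" "src c2 = (w, True)" for c1 c2 w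
  proof -
    have "(w, True) \<in> src ` set es"
      using that(2,4) labelled_edge_point_edges(1) by force
    then show False
      using no_shortcut that(1,3) labelled_edge_point_edges by blast
  qed
  obtain w b b' where "src c = (w, b)" "src c' = (w, b')"
    using assms(3) by (metis prod.collapse)
  moreover assume "src c \<noteq> src c'"
  ultimately show False
    using no_both_ends[of c c' w] no_both_ends[of c' c w] assms(1,2) by (cases b; cases b') auto
qed

lemma distinct_cycle_vars: "distinct cycle_vars"
proof -
  have "distinct (map src labelled_edges)"
    using distinct_sources by (simp add: labelled_edges_def distinct_map_filter)
  then show ?thesis
    using labelled_edge_source_determined
    by (simp add: cycle_vars_def distinct_map inj_on_def)
qed

lemma scopes_cycle_constraints: "map scope cycle_constraints = cycle_edges cycle_vars"
proof (rule nth_equalityI)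
  show "length (map scope cycle_constraints) = length (cycle_edges cycle_vars)"
    by (simp add: cycle_constraints_def cycle_vars_def cycle_edges_def)
  have closed: "var_walk labelled_edges (fst p) (fst p)"
    using strict_cycle var_walk_labelled_edges unfolding labelled_edges_def strict_cycle_def by blast
  fix j assume "j < length (map scope cycle_constraints)"
  then have j: "j < length labelled_edges"
    by (simp add: cycle_constraints_def)
  then obtain c where c: "label (labelled_edges ! j) = Some c"
    using labelled_edge_point_edges(3)[OF nth_mem] by blast
  have "scope c = {fst (src (labelled_edges ! j)), fst (dst (labelled_edges ! j))}"
    using constraint_edge_in_point_edges(2)[OF labelled_edge_point_edges(2)[OF nth_mem[OF j]] c] ..
  moreover have "(j + 1) mod length labelled_edges < length labelled_edges"
    by (rule mod_less_divisor) (use j in linarith)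
  ultimately have "scope c = cycle_edges cycle_vars ! j"
    using j var_walk_closed_nth[OF closed j] by (simp add: cycle_vars_def cycle_edges_def)
  then show "map scope cycle_constraints ! j = cycle_edges cycle_vars ! j"
    using c j by (simp add: cycle_constraints_def)
qed

lemma cycle_constraints_subset: "set cycle_constraints \<subseteq> D"
  using labelled_edge_point_edges constraint_edge_in_point_edges(1)
  by (fastforce simp: cycle_constraints_def)

lemma strict_cycle_cycle_constraints: "strict_cycle (set cycle_constraints) es p"
proof -
  have "e \<in> point_edges (set cycle_constraints)" if "e \<in> set es" for e
  proof (rule point_edges_relabel)
    show "e \<in> point_edges D"
      using that strict_cycle by (auto simp: strict_cycle_def)
    show "c \<in> set cycle_constraints" if "label e = Some c" for c
    proof -
      have "label e \<noteq> None"
        using that by simp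
      then have "e \<in> set labelled_edges"
        using \<open>e \<in> set es\<close> unfolding labelled_edges_def set_filter by blast
      then show ?thesis
        unfolding cycle_constraints_def using that by force
    qed
  qed
  then show ?thesis
    using strict_cycle by (auto simp: strict_cycle_def)
qed

end

section \<open>Minimally inconsistent constraint sets\<close>

lemma allen_rel_realizable: "\<exists>I J. is_interval I \<and> is_interval J \<and> allen_rel R I J"
proof -
  let ?S = "{(0, 1), (0, 2), (0, 3), (1, 2), (1, 3), (2, 3)} :: interval set"
  have "\<forall>I \<in> ?S. is_interval I"
    by (simp add: is_interval_def)
  moreover have "\<exists>I \<in> ?S. \<exists>J \<in> ?S. allen_rel R I J"
    by (cases R) auto
  ultimately show ?thesis
    by blast
qed

lemma consistent_singleton: "x \<noteq> y \<Longrightarrow> consistent {(x, R, y)}"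
proof -
  assume "x \<noteq> y"
  obtain I J where "is_interval I" "is_interval J" "allen_rel R I J"
    using allen_rel_realizable by blast
  with \<open>x \<noteq> y\<close> show ?thesis
    unfolding consistent_def by (intro exI[of _ "\<lambda>v. if v = x then I else J"]) auto
qed

lemma consistent_insert_equal_loop: "consistent (insert (x, Aeq, x) D) \<longleftrightarrow> consistent D"
  by (simp add: consistent_def)

lemma allen_rel_irreflexive: "R \<noteq> Aeq \<Longrightarrow> is_interval I \<Longrightarrow> \<not> allen_rel R I I"
  by (cases R) (auto simp: is_interval_def)

lemma loop_inconsistent: "R \<noteq> Aeq \<Longrightarrow> \<not> consistent {(x, R, x)}"
  unfolding consistent_def using allen_rel_irreflexive by blast

definition minimally_inconsistent :: "('v \<times> allen \<times> 'v) set \<Rightarrow> bool" where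
  "minimally_inconsistent D \<longleftrightarrow> \<not> consistent D \<and> (\<forall>D'. D' \<subset> D \<longrightarrow> consistent D')"

lemma minimally_inconsistent_loop:
  assumes "minimally_inconsistent D" "(x, R, x) \<in> D"
  shows "D = {(x, R, x)}"
proof -
  have inconsistent: "\<not> consistent D" and critical: "\<And>D'. D' \<subset> D \<Longrightarrow> consistent D'"
    using assms(1) by (auto simp: minimally_inconsistent_def)
  have "R \<noteq> Aeq"
  proof
    assume "R = Aeq"
    have "consistent (D - {(x, Aeq, x)})"
      using critical assms(2) \<open>R = Aeq\<close> by blast
    then have "consistent (insert (x, Aeq, x) (D - {(x, Aeq, x)}))"
      by (simp only: consistent_insert_equal_loop)
    moreover have "insert (x, Aeq, x) (D - {(x, Aeq, x)}) = D"
      using assms(2) \<open>R = Aeq\<close> by blast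
    ultimately show False
      using inconsistent by simp
  qed
  show ?thesis
  proof (rule ccontr)
    assume "D \<noteq> {(x, R, x)}"
    then have "{(x, R, x)} \<subset> D"
      using assms(2) by auto
    show False
      using loop_inconsistent[OF \<open>R \<noteq> Aeq\<close>, of x] critical[OF \<open>{(x, R, x)} \<subset> D\<close>]
      by (rule notE)
  qed
qed

lemma loop_free_minimally_inconsistent_forms_cycle:
  fixes D :: "('v \<times> allen \<times> 'v) set"
  assumes "finite D" "minimally_inconsistent D"
    and loop_free: "\<And>x R y. (x, R, y) \<in> D \<Longrightarrow> x \<noteq> y"
  shows "\<exists>vs cs. vs \<noteq> [] \<and> distinct vs \<and> distinct cs \<and> set cs = D \<and> map scope cs = cycle_edges vs"
proof -
  have inconsistent: "\<not> consistent D" and critical: "\<And>D'. D' \<subset> D \<Longrightarrow> consistent D'"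
    using assms(2) by (auto simp: minimally_inconsistent_def)
  obtain es0 p0 where "strict_cycle D es0 p0"
    using consistent_if_no_strict_cycle assms(1) inconsistent by blast
  then have "strict_cycle D (fst (es0, p0)) (snd (es0, p0))"
    by simp
  from ex_has_least_nat[of "\<lambda>c. strict_cycle D (fst c) (snd c)", OF this, of "\<lambda>c. length (fst c)"]
  obtain c where c: "strict_cycle D (fst c) (snd c)"
    and least: "\<And>c'. strict_cycle D (fst c') (snd c') \<Longrightarrow> length (fst c) \<le> length (fst c')"
    by blast
  interpret shortest_strict_cycle D "fst c" "snd c"
  proof
    show "length (fst c) \<le> length es'" if "strict_cycle D es' q" for es' q
      using least[of "(es', q)"] that by simp
  qed (use c loop_free in auto)
  have "set cycle_constraints = D"
  proof (rule ccontr)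
    assume "set cycle_constraints \<noteq> D"
    with cycle_constraints_subset have "set cycle_constraints \<subset> D"
      by blast
    then show False
      using strict_cycle_imp_inconsistent[OF strict_cycle_cycle_constraints] critical by blast
  qed
  moreover have "distinct cycle_constraints"
  proof (rule ccontr)
    assume "\<not> distinct cycle_constraints"
    then have "\<not> distinct (map scope cycle_constraints)"
      by (simp add: distinct_map)
    then have "length cycle_vars = 2"
      using distinct_cycle_edges[OF distinct_cycle_vars] by (auto simp: scopes_cycle_constraints)
    then have "length cycle_constraints = 2"
      by (simp add: cycle_vars_def cycle_constraints_def)
    then obtain c c' where "cycle_constraints = [c, c']"
      by (auto simp: numeral_2_eq_2 length_Suc_conv)
    with \<open>\<not> distinct cycle_constraints\<close> \<open>set cycle_constraints = D\<close> have "D = {c}"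
      by simp
    moreover obtain x R y where "c = (x, R, y)"
      by (cases c)
    moreover have "x \<noteq> y"
      using loop_free calculation by simp
    ultimately show False
      using consistent_singleton[of x y R] inconsistent by simp
  qed
  moreover have "cycle_vars \<noteq> []"
    using labelled_edges_nonempty by (simp add: cycle_vars_def)
  ultimately show ?thesis
    using distinct_cycle_vars scopes_cycle_constraints by blast
qed

lemma minimally_inconsistent_forms_cycle:
  fixes D :: "('v \<times> allen \<times> 'v) set"
  assumes "finite D" "minimally_inconsistent D"
  shows "\<exists>vs cs. vs \<noteq> [] \<and> distinct vs \<and> distinct cs \<and> set cs = D \<and> map scope cs = cycle_edges vs"
proof (cases "\<exists>x R. (x, R, x) \<in> D")
  case True
  then obtain x R where "(x, R, x) \<in> D"
    by blast
  with assms(2) have "D = {(x, R, x)}"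
    by (rule minimally_inconsistent_loop)
  moreover have "cycle_edges [x] = [{x}]"
    by (simp add: cycle_edges_def)
  ultimately show ?thesis
    by (intro exI[of _ "[x]"] exI[of _ "[(x, R, x)]"]) simp
next
  case False
  have "x \<noteq> y" if "(x, R, y) \<in> D" for x R y
    using False that by blast
  from loop_free_minimally_inconsistent_forms_cycle[OF assms this] show ?thesis .
qed

lemma nth_in_remove_constraint:
  assumes "j < length C" "j \<noteq> i"
  shows "C ! j \<in> set (remove_constraint C i)"
proof (cases "j < i")
  case True
  then show ?thesis
    using assms by (auto simp: remove_constraint_def in_set_conv_nth intro!: exI[of _ j])
next
  case False
  then show ?thesis
    using assms by (auto simp: remove_constraint_def in_set_conv_nth intro!: exI[of _ "j - Suc i"])
qed

lemma minimal_unsat_distinct: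
  assumes "minimal_unsat C"
  shows "distinct C"
proof (rule ccontr)
  assume "\<not> distinct C"
  then obtain i j where ij: "i < length C" "j < length C" "i \<noteq> j" "C ! i = C ! j"
    by (auto simp: distinct_conv_nth)
  have "set C \<subseteq> set (remove_constraint C i)"
  proof
    fix c assume "c \<in> set C"
    then obtain k where "k < length C" "c = C ! k"
      by (auto simp: in_set_conv_nth)
    then show "c \<in> set (remove_constraint C i)"
      using ij nth_in_remove_constraint[of k C i] nth_in_remove_constraint[of j C i]
      by (cases "k = i") auto
  qed
  then show False
    using assms \<open>i < length C\<close> consistent_subset
    by (auto simp: minimal_unsat_def satisfiable_iff_consistent)
qed

lemma minimal_unsat_minimally_inconsistent:
  assumes "minimal_unsat C"
  shows "minimally_inconsistent (set C)"
  unfolding minimally_inconsistent_def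
proof (intro conjI allI impI)
  show "\<not> consistent (set C)"
    using assms by (simp add: minimal_unsat_def satisfiable_iff_consistent)
  fix D assume "D \<subset> set C"
  then obtain c where "c \<in> set C" "c \<notin> D"
    by blast
  then obtain j where j: "j < length C" "C ! j \<notin> D"
    by (metis in_set_conv_nth)
  have "D \<subseteq> set (remove_constraint C j)"
  proof
    fix c assume "c \<in> D"
    then have "c \<in> set C"
      using \<open>D \<subset> set C\<close> by blast
    then obtain k where "k < length C" "c = C ! k"
      by (metis in_set_conv_nth)
    then show "c \<in> set (remove_constraint C j)"
      using j \<open>c \<in> D\<close> nth_in_remove_constraint[of k C j] by auto
  qed
  then show "consistent D"
    using assms j(1) consistent_subset
    by (auto simp: minimal_unsat_def satisfiable_iff_consistent)
qed

lemma primal_edges_eq: "primal_edges C = mset (map scope C)"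
  by (simp add: primal_edges_def scope_def)

lemma vars_eq: "vars C = \<Union> (scope ` set C)"
  by (simp add: vars_def scope_def)

theorem mainTheorem4:
  fixes C :: "'v csp_instance"
  assumes "minimal_unsat C"
  shows "is_cycle (vars C) (primal_edges C)"
proof -
  obtain vs cs where "vs \<noteq> []" "distinct vs" "distinct cs" "set cs = set C"
    and scopes: "map scope cs = cycle_edges vs"
    using minimally_inconsistent_forms_cycle[OF finite_set minimal_unsat_minimally_inconsistent[OF assms]]
    by blast
  then have "mset C = mset cs"
    using minimal_unsat_distinct[OF assms] by (simp add: set_eq_iff_mset_eq_distinct)
  then have "primal_edges C = mset (cycle_edges vs)"
    by (simp add: primal_edges_eq flip: scopes)
  moreover have "vars C = \<Union> (set (map scope cs))"
    using \<open>set cs = set C\<close> by (simp add: vars_eq)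
  then have "vars C = set vs"
    by (simp only: scopes Union_cycle_edges)
  ultimately show ?thesis
    unfolding is_cycle_iff_cycle_edges using \<open>vs \<noteq> []\<close> \<open>distinct vs\<close> by blast
qed

end
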